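(* Let $G$ be a finite group with identity $e$. If $G$ has a sequencing whose first element is $x$, then $G$ has an $S$-sequencing for $S=G\setminus\{e,x\}$.
   Context: For $S\subseteq G\setminus\{e\}$ with $|S|=k$, an $S$-sequencing of $G$ is an ordering $(g_1,\dots,g_k)$ of the elements of $S$ (each used once) such that the partial products $h_0=e$, $h_i=g_1\cdots g_i$ ($1\le i\le k$) are pairwise distinct. A sequencing of $G$ is an $S$-sequencing with $S=G\setminus\{e\}$. *)

theory Defs
  imports "HOL-Algebra.Group"
begin

definition partial_prod :: "('a, 'b) monoid_scheme \<Rightarrow> 'a list \<Rightarrow> nat \<Rightarrow> 'a" where
  "partial_prod G gs i = foldl (\<lambda>h g. h \<otimes>\<^bsub>G\<^esub> g) \<one>\<^bsub>G\<^esub> (take i gs)"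

definition is_S_sequencing :: "('a, 'b) monoid_scheme \<Rightarrow> 'a set \<Rightarrow> 'a list \<Rightarrow> bool" where
  "is_S_sequencing G S gs \<longleftrightarrow>
     S \<subseteq> carrier G - {\<one>\<^bsub>G\<^esub>} \<and> distinct gs \<and> set gs = S \<and>
     inj_on (partial_prod G gs) {0..length gs}"

definition is_sequencing :: "('a, 'b) monoid_scheme \<Rightarrow> 'a list \<Rightarrow> bool" where
  "is_sequencing G gs \<longleftrightarrow> is_S_sequencing G (carrier G - {\<one>\<^bsub>G\<^esub>}) gs"

end

theory Submission
  imports Defs
begin

text \<open>Dropping the first entry g of an S-sequencing multiplies every remaining partial
  product on the left by g, which preserves their distinctness.\<close>

lemma (in monoid) foldl_mult_assoc:
  assumes "a \<in> carrier G" "b \<in> carrier G" "set l \<subseteq> carrier G"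
  shows "foldl (\<lambda>h g. h \<otimes> g) (a \<otimes> b) l = a \<otimes> foldl (\<lambda>h g. h \<otimes> g) b l"
  using assms(2,3)
proof (induction l arbitrary: b)
  case Nil
  then show ?case by simp
next
  case (Cons y l)
  then have "foldl (\<lambda>h g. h \<otimes> g) (a \<otimes> b \<otimes> y) l = a \<otimes> foldl (\<lambda>h g. h \<otimes> g) (b \<otimes> y) l"
    using assms(1) by (simp add: m_assoc)
  then show ?case by simp
qed

lemma (in monoid) partial_prod_Cons_Suc:
  assumes "x \<in> carrier G" "set xs \<subseteq> carrier G"
  shows "partial_prod G (x # xs) (Suc i) = x \<otimes> partial_prod G xs i"
proof -
  have "set (take i xs) \<subseteq> carrier G"
    using assms(2) by (auto dest: in_set_takeD)
  then have "foldl (\<lambda>h g. h \<otimes> g) (x \<otimes> \<one>) (take i xs) = x \<otimes> partial_prod G xs i"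
    unfolding partial_prod_def using assms(1) by (intro foldl_mult_assoc) auto
  then show ?thesis
    using assms(1) by (simp add: partial_prod_def)
qed

lemma (in monoid) is_S_sequencing_tl:
  assumes "is_S_sequencing G S (x # xs)"
  shows "is_S_sequencing G (S - {x}) xs"
proof -
  have seq: "S \<subseteq> carrier G - {\<one>}" "distinct (x # xs)" "set (x # xs) = S"
    "inj_on (partial_prod G (x # xs)) {0..length (x # xs)}"
    using assms unfolding is_S_sequencing_def by auto
  have carr: "x \<in> carrier G" "set xs \<subseteq> carrier G"
    using seq(1,3) by auto
  have "inj_on (partial_prod G xs) {0..length xs}"
  proof (rule inj_onI)
    fix i j
    assume ij: "i \<in> {0..length xs}" "j \<in> {0..length xs}"
      and "partial_prod G xs i = partial_prod G xs j"
    then have "partial_prod G (x # xs) (Suc i) = partial_prod G (x # xs) (Suc j)"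
      using carr by (simp add: partial_prod_Cons_Suc)
    with seq(4) ij show "i = j"
      by (auto dest: inj_onD)
  qed
  with seq show ?thesis
    unfolding is_S_sequencing_def by auto
qed

theorem lemma4p4:
  fixes G :: "('a, 'b) monoid_scheme" and x :: 'a and gs :: "'a list"
  assumes "group G" and "finite (carrier G)"
    and "is_sequencing G gs" and "gs \<noteq> []" and "hd gs = x"
  shows "\<exists>hs. is_S_sequencing G (carrier G - {\<one>\<^bsub>G\<^esub>, x}) hs"
proof -
  interpret group G by fact
  obtain xs where gs: "gs = x # xs"
    using assms(4,5) by (cases gs) auto
  have "is_S_sequencing G (carrier G - {\<one>\<^bsub>G\<^esub>} - {x}) xs"
    using assms(3) unfolding gs is_sequencing_def by (rule is_S_sequencing_tl)
  then show ?thesis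
    by (metis Diff_insert2)
qed

end
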